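(* For $n\ge1$ let $T_n$ be the number of domino tilings of $C_3\times P_{2n}$. For $n\ge0$ let $t_n$ be the number of domino tilings of the graph obtained from $C_3\times P_{2n+1}$ by deleting one vertex of the end copy $C_3\times\{1\}$. Then $$T_n=T_{n-1}+3t_{n-1}\ (n\ge2),\qquad t_n=T_n+t_{n-1}\ (n\ge1),$$ and $T_n=5T_{n-1}-T_{n-2}$ $(n\ge3)$, $t_n=5t_{n-1}-t_{n-2}$ $(n\ge2)$. Moreover, $$T_n=\frac1{14}\Big[(7+\sqrt{21})\Big(\tfrac{5+\sqrt{21}}2\Big)^n+(7-\sqrt{21})\Big(\tfrac{5-\sqrt{21}}2\Big)^n\Big]\quad(n\ge1),$$ $$t_n=\frac{1}{\sqrt{21}}\Big[\Big(\tfrac{5+\sqrt{21}}2\Big)^{n+1}-\Big(\tfrac{5-\sqrt{21}}2\Big)^{n+1}\Big]\quad(n\ge0).$$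
   Context: $H\times K$ denotes the Cartesian product of graphs. $P_m$ is the path with vertex set $\{1,\dots,m\}$ and $C_3$ is the triangle. A domino tiling of a finite graph is a perfect matching, and the number of domino tilings is the number of perfect matchings. *)

theory Defs
  imports Complex_Main
begin

text \<open>A finite simple graph is given by a vertex set V and a symmetric irreflexive
adjacency relation E.  A perfect matching (domino tiling) is a set of edges
(two-element vertex sets {u,v} with E u v) such that every vertex lies in exactly one of them.\<close>

definition graph_edges :: "'a set \<Rightarrow> ('a \<Rightarrow> 'a \<Rightarrow> bool) \<Rightarrow> 'a set set" where
  "graph_edges V E = {{u, v} | u v. u \<in> V \<and> v \<in> V \<and> E u v}"

definition perfect_matchings :: "'a set \<Rightarrow> ('a \<Rightarrow> 'a \<Rightarrow> bool) \<Rightarrow> 'a set set set" where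
  "perfect_matchings V E =
     {M. M \<subseteq> graph_edges V E \<and> (\<forall>v\<in>V. \<exists>!e. e \<in> M \<and> v \<in> e)}"

definition num_tilings :: "'a set \<Rightarrow> ('a \<Rightarrow> 'a \<Rightarrow> bool) \<Rightarrow> nat" where
  "num_tilings V E = card (perfect_matchings V E)"

definition cart_adj :: "('a \<Rightarrow> 'a \<Rightarrow> bool) \<Rightarrow> ('b \<Rightarrow> 'b \<Rightarrow> bool) \<Rightarrow> 'a \<times> 'b \<Rightarrow> 'a \<times> 'b \<Rightarrow> bool" where
  "cart_adj EH EK x y \<longleftrightarrow>
     (EH (fst x) (fst y) \<and> snd x = snd y) \<or> (fst x = fst y \<and> EK (snd x) (snd y))"

definition C3_verts :: "nat set" where "C3_verts = {0, 1, 2}"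
definition C3_adj :: "nat \<Rightarrow> nat \<Rightarrow> bool" where "C3_adj a b \<longleftrightarrow> a \<noteq> b"

definition P_verts :: "nat \<Rightarrow> nat set" where "P_verts m = {1..m}"
definition P_adj :: "nat \<Rightarrow> nat \<Rightarrow> bool" where "P_adj i j \<longleftrightarrow> i = j + 1 \<or> j = i + 1"

definition T_til :: "nat \<Rightarrow> nat" where
  "T_til n = num_tilings (C3_verts \<times> P_verts (2*n)) (cart_adj C3_adj P_adj)"

definition t_til :: "nat \<Rightarrow> nat" where
  "t_til n = num_tilings (C3_verts \<times> P_verts (2*n+1) - {(0, 1)}) (cart_adj C3_adj P_adj)"

end

theory Submission
  imports Defs "HOL-Combinatorics.Transposition"
begin

text \<open>Classifying the tilings by the domino that covers a corner vertex gives
  \<open>T(n) = T(n - 1) + 3 t(n - 1)\<close> and \<open>t(n) = T(n) + t(n - 1)\<close>: in each branch a few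
  further dominoes are forced, and what is left is a translated copy of a smaller prism,
  possibly with two of its three rows exchanged. Eliminating one sequence gives recurrences
  with characteristic polynomial \<open>x\<^sup>2 - 5 x + 1\<close>, and the closed forms follow by induction
  from \<open>T(0) = t(0) = 1\<close>.\<close>

section \<open>Perfect matchings\<close>

lemma graph_edges_subset: "e \<in> graph_edges V E \<Longrightarrow> e \<subseteq> V"
  unfolding graph_edges_def by auto

lemma graph_edges_mono: "V \<subseteq> W \<Longrightarrow> graph_edges V E \<subseteq> graph_edges W E"
  unfolding graph_edges_def by blast

lemma perfect_matchingsI:
  assumes "M \<subseteq> graph_edges V E"
    and "\<And>w. w \<in> V \<Longrightarrow> \<exists>e\<in>M. w \<in> e"
    and "\<And>w e1 e2. w \<in> V \<Longrightarrow> e1 \<in> M \<Longrightarrow> e2 \<in> M \<Longrightarrow> w \<in> e1 \<Longrightarrow> w \<in> e2 \<Longrightarrow> e1 = e2"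
  shows "M \<in> perfect_matchings V E"
  using assms unfolding perfect_matchings_def by blast

lemma perfect_matchingsD:
  assumes "M \<in> perfect_matchings V E"
  shows perfect_matchings_subset: "M \<subseteq> graph_edges V E"
    and perfect_matchings_cover: "w \<in> V \<Longrightarrow> \<exists>e\<in>M. w \<in> e"
    and perfect_matchings_unique:
      "w \<in> V \<Longrightarrow> e1 \<in> M \<Longrightarrow> e2 \<in> M \<Longrightarrow> w \<in> e1 \<Longrightarrow> w \<in> e2 \<Longrightarrow> e1 = e2"
  using assms unfolding perfect_matchings_def by blast+

lemma perfect_matchings_subset_Pow: "perfect_matchings V E \<subseteq> Pow (Pow V)"
  using perfect_matchings_subset graph_edges_subset by blast

lemma finite_perfect_matchings: "finite V \<Longrightarrow> finite (perfect_matchings V E)"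
  using perfect_matchings_subset_Pow by (metis finite_Pow_iff finite_subset)

lemma num_tilings_empty: "num_tilings {} E = 1"
proof -
  have "graph_edges {} E = {}"
    unfolding graph_edges_def by auto
  then have "perfect_matchings {} E = {{}}"
    unfolding perfect_matchings_def by auto
  then show ?thesis
    unfolding num_tilings_def by simp
qed

lemma insert_edge_perfect_matchings:
  assumes M: "M \<in> perfect_matchings (V - {u, v}) E" and "u \<in> V" "v \<in> V" "E v u"
  shows "insert {u, v} M \<in> perfect_matchings V E"
proof (rule perfect_matchingsI)
  have "{u, v} \<in> graph_edges V E"
    unfolding graph_edges_def using assms by blast
  then show "insert {u, v} M \<subseteq> graph_edges V E"
    using perfect_matchings_subset[OF M] graph_edges_mono[of "V - {u, v}" V E] by blast
next
  fix w assume "w \<in> V"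
  then show "\<exists>e\<in>insert {u, v} M. w \<in> e"
    using perfect_matchings_cover[OF M, of w] by (cases "w \<in> {u, v}") auto
next
  have edges_avoid: "e \<subseteq> V - {u, v}" if "e \<in> M" for e
    using that perfect_matchings_subset[OF M] graph_edges_subset by blast
  fix w e1 e2 assume "w \<in> V" "e1 \<in> insert {u, v} M" "e2 \<in> insert {u, v} M" "w \<in> e1" "w \<in> e2"
  then show "e1 = e2"
    using edges_avoid perfect_matchings_unique[OF M, of w e1 e2] by (cases "w \<in> {u, v}") auto
qed

lemma remove_edge_perfect_matchings:
  assumes M: "M \<in> perfect_matchings V E" and uv: "{u, v} \<in> M" "u \<in> V" "v \<in> V"
  shows "M - {{u, v}} \<in> perfect_matchings (V - {u, v}) E"
proof (rule perfect_matchingsI)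
  show "M - {{u, v}} \<subseteq> graph_edges (V - {u, v}) E"
  proof
    fix e assume e: "e \<in> M - {{u, v}}"
    then obtain c d where cd: "e = {c, d}" "c \<in> V" "d \<in> V" "E c d"
      using perfect_matchings_subset[OF M] unfolding graph_edges_def by blast
    have "x \<notin> e" if "x \<in> {u, v}" for x
      using that e uv perfect_matchings_unique[OF M, of x e "{u, v}"] by blast
    then show "e \<in> graph_edges (V - {u, v}) E"
      unfolding graph_edges_def using cd by blast
  qed
next
  fix w assume "w \<in> V - {u, v}"
  then show "\<exists>e\<in>M - {{u, v}}. w \<in> e"
    using perfect_matchings_cover[OF M, of w] by blast
next
  fix w e1 e2 assume "w \<in> V - {u, v}" "e1 \<in> M - {{u, v}}" "e2 \<in> M - {{u, v}}" "w \<in> e1" "w \<in> e2"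
  then show "e1 = e2"
    using perfect_matchings_unique[OF M, of w e1 e2] by blast
qed

lemma perfect_matchings_edge_at:
  assumes M: "M \<in> perfect_matchings V E" and "v \<in> V" and sym: "\<And>x y. E x y \<Longrightarrow> E y x"
  obtains u where "u \<in> V" "E v u" "{u, v} \<in> M"
proof -
  obtain e where e: "e \<in> M" "v \<in> e"
    using perfect_matchings_cover[OF M \<open>v \<in> V\<close>] by blast
  then obtain a b where "e = {a, b}" "a \<in> V" "b \<in> V" "E a b"
    using perfect_matchings_subset[OF M] unfolding graph_edges_def by blast
  then show ?thesis
    using that e sym by (metis empty_iff insert_commute insert_iff)
qed

lemma num_tilings_expand:
  assumes "finite V" and v: "v \<in> V"
    and sym: "\<And>x y. E x y \<Longrightarrow> E y x" and irrefl: "\<And>x. \<not> E x x"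
  shows "num_tilings V E = (\<Sum>u | u \<in> V \<and> E v u. num_tilings (V - {u, v}) E)"
proof -
  let ?N = "{u. u \<in> V \<and> E v u}"
  let ?P = "\<lambda>u. insert {u, v} ` perfect_matchings (V - {u, v}) E"
  have P_sub: "?P u \<subseteq> perfect_matchings V E" if "u \<in> ?N" for u
    using that v by (auto intro!: image_subsetI insert_edge_perfect_matchings)
  have decomp: "perfect_matchings V E = (\<Union>u\<in>?N. ?P u)"
  proof
    show "perfect_matchings V E \<subseteq> (\<Union>u\<in>?N. ?P u)"
    proof
      fix M assume M: "M \<in> perfect_matchings V E"
      obtain u where u: "u \<in> V" "E v u" "{u, v} \<in> M"
        using perfect_matchings_edge_at[OF M v sym] by blast
      have "M = insert {u, v} (M - {{u, v}})"
        using u(3) by (simp add: insert_absorb)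
      then have "M \<in> ?P u"
        using remove_edge_perfect_matchings[OF M u(3) u(1) v] by (metis imageI)
      then show "M \<in> (\<Union>u\<in>?N. ?P u)"
        using u(1,2) by blast
    qed
  qed (use P_sub in blast)
  have disjoint: "?P u1 \<inter> ?P u2 = {}" if u: "u1 \<in> ?N" "u2 \<in> ?N" "u1 \<noteq> u2" for u1 u2
  proof -
    have ne: "{u1, v} \<noteq> {u2, v}"
      using u irrefl by (metis doubleton_eq_iff)
    have "M \<notin> ?P u2" if M: "M \<in> ?P u1" for M
    proof
      assume "M \<in> ?P u2"
      then have "{u2, v} \<in> M"
        by auto
      moreover have "{u1, v} \<in> M" "M \<in> perfect_matchings V E"
        using M P_sub[OF u(1)] by auto
      ultimately show False
        using ne perfect_matchings_unique[of M V E v "{u1, v}" "{u2, v}"] v by blast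
    qed
    then show ?thesis
      by blast
  qed
  have card_P: "card (?P u) = num_tilings (V - {u, v}) E" for u
  proof -
    have "{u, v} \<notin> M" if "M \<in> perfect_matchings (V - {u, v}) E" for M
      using that perfect_matchings_subset graph_edges_subset by blast
    then have "inj_on (insert {u, v}) (perfect_matchings (V - {u, v}) E)"
      by (intro inj_onI) (metis insert_ident)
    then show ?thesis
      unfolding num_tilings_def by (rule card_image)
  qed
  have "num_tilings V E = card (\<Union>u\<in>?N. ?P u)"
    unfolding num_tilings_def decomp ..
  also have "\<dots> = (\<Sum>u\<in>?N. card (?P u))"
    using \<open>finite V\<close> disjoint by (intro card_UN_disjoint) (simp_all add: finite_perfect_matchings)
  finally show ?thesis
    by (simp add: card_P)
qed

lemma image_perfect_matchings:
  assumes M: "M \<in> perfect_matchings V E" and inj: "inj_on f V"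
    and adj: "\<And>x y. x \<in> V \<Longrightarrow> y \<in> V \<Longrightarrow> E' (f x) (f y) = E x y"
  shows "(`) f ` M \<in> perfect_matchings (f ` V) E'"
proof (rule perfect_matchingsI)
  show "(`) f ` M \<subseteq> graph_edges (f ` V) E'"
  proof (rule image_subsetI)
    fix e assume "e \<in> M"
    then obtain a b where "e = {a, b}" "a \<in> V" "b \<in> V" "E a b"
      using perfect_matchings_subset[OF M] unfolding graph_edges_def by blast
    then show "f ` e \<in> graph_edges (f ` V) E'"
      using adj[of a b] unfolding graph_edges_def by blast
  qed
next
  fix w' assume "w' \<in> f ` V"
  then obtain w where w: "w \<in> V" "w' = f w"
    by blast
  then obtain e where "e \<in> M" "w \<in> e"
    using perfect_matchings_cover[OF M] by blast
  then show "\<exists>e\<in>(`) f ` M. w' \<in> e"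
    using w by blast
next
  fix w' e1 e2 assume "w' \<in> f ` V" and e: "e1 \<in> (`) f ` M" "e2 \<in> (`) f ` M" "w' \<in> e1" "w' \<in> e2"
  then obtain w d1 d2 where w: "w \<in> V" "w' = f w"
    and d: "d1 \<in> M" "e1 = f ` d1" "d2 \<in> M" "e2 = f ` d2"
    by blast
  have "d1 \<subseteq> V" "d2 \<subseteq> V"
    using d perfect_matchings_subset[OF M] graph_edges_subset by blast+
  then have "w \<in> d1" "w \<in> d2"
    using d e w inj by (simp_all add: inj_on_image_mem_iff)
  then show "e1 = e2"
    using perfect_matchings_unique[OF M w(1) d(1) d(3)] d by simp
qed

lemma num_tilings_image_ge:
  assumes "finite V" and inj: "inj_on f V"
    and adj: "\<And>x y. x \<in> V \<Longrightarrow> y \<in> V \<Longrightarrow> E' (f x) (f y) = E x y"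
  shows "num_tilings V E \<le> num_tilings (f ` V) E'"
  unfolding num_tilings_def
proof (rule card_inj_on_le)
  show "inj_on ((`) ((`) f)) (perfect_matchings V E)"
    by (rule inj_on_subset[OF inj_on_image_Pow[OF inj_on_image_Pow[OF inj]]
          perfect_matchings_subset_Pow])
  show "(`) ((`) f) ` perfect_matchings V E \<subseteq> perfect_matchings (f ` V) E'"
    by (rule image_subsetI) (rule image_perfect_matchings[of _ V E f E', OF _ inj adj])
  show "finite (perfect_matchings (f ` V) E')"
    by (rule finite_perfect_matchings[OF finite_imageI[OF \<open>finite V\<close>]])
qed

lemma num_tilings_image:
  assumes fin: "finite V" and inj: "inj_on f V"
    and adj: "\<And>x y. x \<in> V \<Longrightarrow> y \<in> V \<Longrightarrow> E' (f x) (f y) = E x y"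
  shows "num_tilings (f ` V) E' = num_tilings V E"
proof (rule antisym)
  let ?g = "inv_into V f"
  have adj': "E (?g x) (?g y) = E' x y" if "x \<in> f ` V" "y \<in> f ` V" for x y
    using that adj inj by (auto simp: inv_into_f_f)
  have "num_tilings (f ` V) E' \<le> num_tilings (?g ` f ` V) E"
    by (rule num_tilings_image_ge[of "f ` V" ?g E E',
          OF finite_imageI[OF fin] inj_on_inv_into[OF subset_refl] adj'])
  also have "?g ` f ` V = V"
    using inj by (rule inv_into_image_cancel) simp
  finally show "num_tilings (f ` V) E' \<le> num_tilings V E" .
  show "num_tilings V E \<le> num_tilings (f ` V) E'"
    by (rule num_tilings_image_ge[of V f E' E, OF fin inj adj])
qed

section \<open>The triangular prism\<close>

abbreviation prism_adj :: "nat \<times> nat \<Rightarrow> nat \<times> nat \<Rightarrow> bool" where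
  "prism_adj \<equiv> cart_adj C3_adj P_adj"

lemma prism_adj_iff [simp]:
  "prism_adj (a, b) (c, d) \<longleftrightarrow> (a \<noteq> c \<and> b = d) \<or> (a = c \<and> (b = d + 1 \<or> d = b + 1))"
  unfolding cart_adj_def C3_adj_def P_adj_def by auto

lemma prism_adj_sym: "prism_adj x y \<Longrightarrow> prism_adj y x"
  by (cases x; cases y) auto

lemma prism_adj_irrefl: "\<not> prism_adj x x"
  by (cases x) auto

lemma num_tilings_prism_expand:
  assumes "finite V" "v \<in> V"
  shows "num_tilings V prism_adj
    = (\<Sum>u | u \<in> V \<and> prism_adj v u. num_tilings (V - {u, v}) prism_adj)"
  by (rule num_tilings_expand[OF assms prism_adj_sym prism_adj_irrefl])

lemma num_tilings_prism_forced:
  assumes "finite V" "v \<in> V" "{u. u \<in> V \<and> prism_adj v u} = {u}"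
  shows "num_tilings V prism_adj = num_tilings (V - {u, v}) prism_adj"
  using num_tilings_prism_expand[OF assms(1,2)] assms(3) by simp

lemma num_tilings_prism_expand2:
  assumes "finite V" "v \<in> V" "{u. u \<in> V \<and> prism_adj v u} = {u1, u2}" "u1 \<noteq> u2"
  shows "num_tilings V prism_adj
    = num_tilings (V - {u1, v}) prism_adj + num_tilings (V - {u2, v}) prism_adj"
  using num_tilings_prism_expand[OF assms(1,2)] assms(3,4) by simp

lemma num_tilings_prism_expand3:
  assumes "finite V" "v \<in> V" "{u. u \<in> V \<and> prism_adj v u} = {u1, u2, u3}"
    and "u1 \<noteq> u2" "u1 \<noteq> u3" "u2 \<noteq> u3"
  shows "num_tilings V prism_adj = num_tilings (V - {u1, v}) prism_adj
    + num_tilings (V - {u2, v}) prism_adj + num_tilings (V - {u3, v}) prism_adj"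
  using num_tilings_prism_expand[OF assms(1,2)] assms(3-) by (simp add: add.assoc)

definition prism_move :: "(nat \<Rightarrow> nat) \<Rightarrow> nat \<Rightarrow> nat \<times> nat \<Rightarrow> nat \<times> nat" where
  "prism_move \<sigma> d x = (\<sigma> (fst x), snd x + d)"

lemma num_tilings_prism_move:
  assumes "finite V" "inj \<sigma>"
  shows "num_tilings (prism_move \<sigma> d ` V) prism_adj = num_tilings V prism_adj"
proof (rule num_tilings_image)
  show "inj_on (prism_move \<sigma> d) V"
    using \<open>inj \<sigma>\<close> unfolding inj_on_def prism_move_def by (auto dest: injD simp: prod_eq_iff)
  show "prism_adj (prism_move \<sigma> d x) (prism_move \<sigma> d y) = prism_adj x y" for x y
    using \<open>inj \<sigma>\<close> unfolding prism_move_def by (cases x; cases y) (auto dest: injD)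
qed fact

lemma prism_move_image:
  assumes "\<sigma> \<circ> \<sigma> = id"
  shows "prism_move \<sigma> d ` A = {(c, j). d \<le> j \<and> (\<sigma> c, j - d) \<in> A}"
proof (intro equalityI subsetI)
  fix x assume "x \<in> {(c, j). d \<le> j \<and> (\<sigma> c, j - d) \<in> A}"
  then obtain c j where "x = (c, j)" "d \<le> j" "(\<sigma> c, j - d) \<in> A"
    by blast
  moreover have "x = prism_move \<sigma> d (\<sigma> c, j - d)"
    using calculation pointfree_idE[OF assms] unfolding prism_move_def by simp
  ultimately show "x \<in> prism_move \<sigma> d ` A"
    by blast
qed (use pointfree_idE[OF assms] in \<open>auto simp: prism_move_def\<close>)

definition prism :: "nat \<Rightarrow> (nat \<times> nat) set" where
  "prism k = {0, 1, 2} \<times> {1..2 * k}"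

definition defect_prism :: "nat \<Rightarrow> (nat \<times> nat) set" where
  "defect_prism k = {0, 1, 2} \<times> {1..2 * k + 1} - {(0, 1)}"

lemma T_til_prism: "T_til k = num_tilings (prism k) prism_adj"
  unfolding T_til_def prism_def C3_verts_def P_verts_def ..

lemma t_til_defect_prism: "t_til k = num_tilings (defect_prism k) prism_adj"
  unfolding t_til_def defect_prism_def C3_verts_def P_verts_def ..

lemma num_tilings_moved_prism:
  "inj \<sigma> \<Longrightarrow> num_tilings (prism_move \<sigma> d ` prism k) prism_adj = T_til k"
  unfolding T_til_prism by (rule num_tilings_prism_move) (simp_all add: prism_def)

lemma num_tilings_moved_defect_prism:
  "inj \<sigma> \<Longrightarrow> num_tilings (prism_move \<sigma> d ` defect_prism k) prism_adj = t_til k"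
  unfolding t_til_defect_prism by (rule num_tilings_prism_move) (simp_all add: defect_prism_def)

lemma T_til_0: "T_til 0 = 1"
  unfolding T_til_prism prism_def by (simp add: num_tilings_empty)

lemma t_til_0: "t_til 0 = 1"
proof -
  let ?V = "{0, 1, 2::nat} \<times> {1..1::nat} - {(0, 1)}"
  have "t_til 0 = num_tilings ?V prism_adj"
    unfolding t_til_defect_prism defect_prism_def by simp
  also have "\<dots> = num_tilings (?V - {(2, 1), (1, 1)}) prism_adj"
    by (rule num_tilings_prism_forced) auto
  also have "?V - {(2, 1), (1, 1)} = {}"
    by auto
  finally show ?thesis
    by (simp add: num_tilings_empty)
qed

lemma T_til_Suc: "T_til (Suc m) = T_til m + 3 * t_til m"
proof -
  let ?V = "{0, 1, 2::nat} \<times> {1..2 * m + 2}"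
  have "T_til (Suc m) = num_tilings ?V prism_adj"
    unfolding T_til_prism prism_def by simp
  also have "\<dots> = num_tilings (?V - {(1, 1), (0, 1)}) prism_adj
      + num_tilings (?V - {(2, 1), (0, 1)}) prism_adj
      + num_tilings (?V - {(0, 2), (0, 1)}) prism_adj"
    by (rule num_tilings_prism_expand3) auto
  also have "num_tilings (?V - {(1, 1), (0, 1)}) prism_adj
      = num_tilings (?V - {(1, 1), (0, 1)} - {(2, 2), (2, 1)}) prism_adj"
    by (rule num_tilings_prism_forced) auto
  also have "?V - {(1, 1), (0, 1)} - {(2, 2), (2, 1)} = prism_move (transpose 0 2) 1 ` defect_prism m"
    unfolding prism_move_image[OF transpose_comp_involutory] defect_prism_def
    by (auto simp: transpose_def split: if_splits)
  also have "num_tilings (?V - {(2, 1), (0, 1)}) prism_adj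
      = num_tilings (?V - {(2, 1), (0, 1)} - {(1, 2), (1, 1)}) prism_adj"
    by (rule num_tilings_prism_forced) auto
  also have "?V - {(2, 1), (0, 1)} - {(1, 2), (1, 1)} = prism_move (transpose 0 1) 1 ` defect_prism m"
    unfolding prism_move_image[OF transpose_comp_involutory] defect_prism_def
    by (auto simp: transpose_def split: if_splits)
  also have "num_tilings (?V - {(0, 2), (0, 1)}) prism_adj
      = num_tilings (?V - {(0, 2), (0, 1)} - {(2, 1), (1, 1)}) prism_adj
      + num_tilings (?V - {(0, 2), (0, 1)} - {(1, 2), (1, 1)}) prism_adj"
    by (rule num_tilings_prism_expand2) auto
  also have "?V - {(0, 2), (0, 1)} - {(2, 1), (1, 1)} = prism_move id 1 ` defect_prism m"
    unfolding prism_move_image[OF comp_id] defect_prism_def by auto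
  also have "num_tilings (?V - {(0, 2), (0, 1)} - {(1, 2), (1, 1)}) prism_adj
      = num_tilings (?V - {(0, 2), (0, 1)} - {(1, 2), (1, 1)} - {(2, 2), (2, 1)}) prism_adj"
    by (rule num_tilings_prism_forced) auto
  also have "?V - {(0, 2), (0, 1)} - {(1, 2), (1, 1)} - {(2, 2), (2, 1)} = prism_move id 2 ` prism m"
    unfolding prism_move_image[OF comp_id] prism_def by auto
  finally show ?thesis
    by (simp add: num_tilings_moved_prism num_tilings_moved_defect_prism inj_transpose)
qed

lemma t_til_Suc: "t_til (Suc m) = T_til (Suc m) + t_til m"
proof -
  let ?V = "{0, 1, 2::nat} \<times> {1..2 * m + 3} - {(0, 1)}"
  have "t_til (Suc m) = num_tilings ?V prism_adj"
    unfolding t_til_defect_prism defect_prism_def by (simp add: numeral_3_eq_3)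
  also have "\<dots> = num_tilings (?V - {(2, 1), (1, 1)}) prism_adj
      + num_tilings (?V - {(1, 2), (1, 1)}) prism_adj"
    by (rule num_tilings_prism_expand2) auto
  also have "?V - {(2, 1), (1, 1)} = prism_move id 1 ` prism (Suc m)"
    unfolding prism_move_image[OF comp_id] prism_def by auto
  also have "num_tilings (?V - {(1, 2), (1, 1)}) prism_adj
      = num_tilings (?V - {(1, 2), (1, 1)} - {(2, 2), (2, 1)}) prism_adj"
    by (rule num_tilings_prism_forced) auto
  also have "\<dots> = num_tilings (?V - {(1, 2), (1, 1)} - {(2, 2), (2, 1)} - {(0, 3), (0, 2)}) prism_adj"
    by (rule num_tilings_prism_forced) auto
  also have "?V - {(1, 2), (1, 1)} - {(2, 2), (2, 1)} - {(0, 3), (0, 2)} = prism_move id 2 ` defect_prism m"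
    unfolding prism_move_image[OF comp_id] defect_prism_def by auto
  finally show ?thesis
    by (simp add: num_tilings_moved_prism num_tilings_moved_defect_prism)
qed

section \<open>Solving the recurrences\<close>

lemma all_ge_iff_all_add: "(\<forall>n\<ge>k. P n) \<longleftrightarrow> (\<forall>m. P (m + k))" for k :: nat
  by (metis le_add2 le_add_diff_inverse2)

lemma coupled_recurrence_second_order:
  fixes T t :: "nat \<Rightarrow> 'a::comm_ring_1"
  assumes T_Suc: "\<And>m. T (Suc m) = T m + 3 * t m"
    and t_Suc: "\<And>m. t (Suc m) = T (Suc m) + t m"
  shows "T (Suc (Suc m)) = 5 * T (Suc m) - T m"
    and "t (Suc (Suc m)) = 5 * t (Suc m) - t m"
proof -
  show "T (Suc (Suc m)) = 5 * T (Suc m) - T m"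
    using T_Suc[of "Suc m"] T_Suc[of m] t_Suc[of m] by (simp add: algebra_simps)
  show "t (Suc (Suc m)) = 5 * t (Suc m) - t m"
    using T_Suc[of "Suc m"] t_Suc[of "Suc m"] t_Suc[of m] by (simp add: algebra_simps)
qed

lemma coupled_recurrence_closed_form:
  fixes T t :: "nat \<Rightarrow> real"
  assumes T_0: "T 0 = 1" and t_0: "t 0 = 1"
    and T_Suc: "\<And>m. T (Suc m) = T m + 3 * t m"
    and t_Suc: "\<And>m. t (Suc m) = T (Suc m) + t m"
  shows "T n = 1/14 * ((7 + sqrt 21) * ((5 + sqrt 21)/2) ^ n + (7 - sqrt 21) * ((5 - sqrt 21)/2) ^ n)
       \<and> t n = 1 / sqrt 21 * (((5 + sqrt 21)/2) ^ (n + 1) - ((5 - sqrt 21)/2) ^ (n + 1))"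
proof -
  define s where "s = sqrt (21::real)"
  define a where "a = (5 + s) / 2"
  define b where "b = (5 - s) / 2"
  have s: "s * s = 21" "s > 0"
    unfolding s_def by simp_all
  have "T n = (7 + s) / 14 * a ^ n + (7 - s) / 14 * b ^ n \<and> t n = (a ^ (n + 1) - b ^ (n + 1)) / s"
  proof (induction n)
    case 0
    show ?case
      using T_0 t_0 s unfolding a_def b_def by (simp add: field_simps)
  next
    case (Suc n)
    then have IH_T: "T n = (7 + s) / 14 * a ^ n + (7 - s) / 14 * b ^ n"
      and IH_t: "t n = (a ^ (n + 1) - b ^ (n + 1)) / s"
      by blast+
    have T_eq: "T (Suc n) = (7 + s) / 14 * a ^ Suc n + (7 - s) / 14 * b ^ Suc n"
    proof -
      have "T (Suc n) = a ^ n * ((7 + s) / 14 + 3 / s * a) + b ^ n * ((7 - s) / 14 - 3 / s * b)"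
        unfolding T_Suc IH_T IH_t using s(2) by (simp add: field_simps)
      also have "(7 + s) / 14 + 3 / s * a = (7 + s) / 14 * a"
        unfolding a_def using s by (simp add: field_simps)
      also have "(7 - s) / 14 - 3 / s * b = (7 - s) / 14 * b"
        unfolding b_def using s by (simp add: field_simps)
      finally show ?thesis
        by (simp add: algebra_simps)
    qed
    have "t (Suc n) = a ^ Suc n * ((7 + s) / 14 + 1 / s) - b ^ Suc n * (1 / s - (7 - s) / 14)"
      unfolding t_Suc T_eq IH_t using s(2) by (simp add: field_simps)
    also have "(7 + s) / 14 + 1 / s = a / s"
      unfolding a_def using s by (simp add: field_simps)
    also have "1 / s - (7 - s) / 14 = b / s"
      unfolding b_def using s by (simp add: field_simps)
    finally show ?case
      using T_eq s(2) by (simp add: field_simps)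
  qed
  then show ?thesis
    unfolding s_def a_def b_def by (simp add: field_simps)
qed

lemma T_til_Suc_Suc: "int (T_til (Suc (Suc m))) = 5 * int (T_til (Suc m)) - int (T_til m)"
  using coupled_recurrence_second_order(1)[of "\<lambda>n. int (T_til n)" "\<lambda>n. int (t_til n)"]
  by (simp add: T_til_Suc t_til_Suc)

lemma t_til_Suc_Suc: "int (t_til (Suc (Suc m))) = 5 * int (t_til (Suc m)) - int (t_til m)"
  using coupled_recurrence_second_order(2)[of "\<lambda>n. int (T_til n)" "\<lambda>n. int (t_til n)"]
  by (simp add: T_til_Suc t_til_Suc)

lemma T_til_t_til_closed_form:
  "real (T_til n) = 1/14 * ((7 + sqrt 21) * ((5 + sqrt 21)/2) ^ n + (7 - sqrt 21) * ((5 - sqrt 21)/2) ^ n)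
 \<and> real (t_til n) = 1 / sqrt 21 * (((5 + sqrt 21)/2) ^ (n + 1) - ((5 - sqrt 21)/2) ^ (n + 1))"
  by (rule coupled_recurrence_closed_form[of "\<lambda>n. real (T_til n)" "\<lambda>n. real (t_til n)"])
    (simp_all add: T_til_0 t_til_0 T_til_Suc t_til_Suc)

theorem theorem8:
  shows "(\<forall>n\<ge>2. T_til n = T_til (n-1) + 3 * t_til (n-1))
       \<and> (\<forall>n\<ge>1. t_til n = T_til n + t_til (n-1))
       \<and> (\<forall>n\<ge>3. int (T_til n) = 5 * int (T_til (n-1)) - int (T_til (n-2)))
       \<and> (\<forall>n\<ge>2. int (t_til n) = 5 * int (t_til (n-1)) - int (t_til (n-2)))
       \<and> (\<forall>n\<ge>1. real (T_til n) = 1/14 * ((7 + sqrt 21) * ((5 + sqrt 21)/2)^n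
                                       + (7 - sqrt 21) * ((5 - sqrt 21)/2)^n))
       \<and> (\<forall>n. real (t_til n) = 1 / sqrt 21 * (((5 + sqrt 21)/2)^(n+1)
                                             - ((5 - sqrt 21)/2)^(n+1)))"
proof -
  have "\<forall>m. T_til (m + 2) = T_til (m + 2 - 1) + 3 * t_til (m + 2 - 1)"
    and "\<forall>m. t_til (m + 1) = T_til (m + 1) + t_til (m + 1 - 1)"
    by (simp_all add: numeral_eq_Suc T_til_Suc t_til_Suc)
  moreover have "\<forall>m. int (T_til (m + 3)) = 5 * int (T_til (m + 3 - 1)) - int (T_til (m + 3 - 2))"
    and "\<forall>m. int (t_til (m + 2)) = 5 * int (t_til (m + 2 - 1)) - int (t_til (m + 2 - 2))"
    using T_til_Suc_Suc t_til_Suc_Suc by (simp_all add: numeral_eq_Suc)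
  ultimately show ?thesis
    unfolding all_ge_iff_all_add using T_til_t_til_closed_form by blast
qed

end
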